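(* Let $2\le j<k$ be integers and consider the election $E(j,k)$ with committees $W=D_{k-2}\cup\{x,a\}$ and $W'=D_{k-2}\cup\{y,b\}$. Then $\Delta(W,a,b)=\delta(j,k)$ and $\Delta(W',b,a)=\delta(j,k)$, where $\delta(j,k)=\frac{j!}{\prod_{j'=0}^{j}(k-j')}>0$; in particular both swaps strictly increase the PAV score.
   Context: An approval election is a tuple $(N,C,(A_v)_{v\in N},k)$ with voters $N$, candidates $C$, ballots $A_v\subseteq C$ and target committee size $k$. The PAV score of $W\subseteq C$ is $\textsc{pavsc}(W)=\sum_{v\in N}\sum_{i=1}^{|A_v\cap W|}\frac1i$, and $\Delta(W,a,b)=\textsc{pavsc}((W\setminus\{a\})\cup\{b\})-\textsc{pavsc}(W)$. Let $D_\ell=\{d_1,\dots,d_\ell\}$ denote a set of dummy candidates ($D_0=\varnothing$, $D_\ell\subseteq D_{\ell+1}$). Elections $F(j,k)$, for $1\le j<k$, with candidate set $D_{k-1}\cup\{a,b\}$ and committee size $k$, are defined recursively. $F(1,k)$ has two voters with ballots $D_{k-1}\cup\{a\}$ and $D_{k-2}\cup\{b\}$. For $j>1$, take a copy of $F(j-1,k)$ with candidates $D_{k-1}\cup\{a_1,b_1\}$ and a copy of $F(j-1,k-1)$ with candidates $D_{k-2}\cup\{a_2,b_2\}$, with disjoint voter sets; in every ballot of the first copy replace $a_1$ by $b$ and $b_1$ by $a$, in every ballot of the second copy replace $a_2$ by $a$ and $b_2$ by $b$; $F(j,k)$ has the union of the two voter sets with these ballots, candidates $D_{k-1}\cup\{a,b\}$,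 and committee size $k$. The election $E(j,k)$ (for $2\le j<k$) is defined as follows: take two copies of $F(j-1,k-1)$ with disjoint voter sets $N_1,N_2$ and candidates $D_{k-2}\cup\{a_1,b_1\}$ and $D_{k-2}\cup\{a_2,b_2\}$ respectively; in ballots of voters in $N_1$ replace $a_1$ by $b$ and $b_1$ by $a$ and add a new candidate $x$; in ballots of voters in $N_2$ replace $a_2$ by $a$ and $b_2$ by $b$ and add a new candidate $y$. $E(j,k)$ has voters $N_1\cup N_2$, candidates $D_{k-2}\cup\{x,y,a,b\}$ and committee size $k$. *)

theory Defs
  imports Main Complex_Main
begin

datatype cand = Dum nat | CA | CB | CX | CY

definition dummies :: "nat \<Rightarrow> cand set" where
  "dummies l = Dum ` {1..l}"

(* An approval election: the voters are represented by the list of their ballots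
   (one entry per voter, repetitions allowed), together with the candidate set
   and the target committee size. *)
record election =
  ballots :: "cand set list"
  cands :: "cand set"
  csize :: nat

definition pavsc :: "election \<Rightarrow> cand set \<Rightarrow> real" where
  "pavsc E W = (\<Sum>A\<leftarrow>ballots E. \<Sum>i=1..card (A \<inter> W). 1 / real i)"

definition Delta :: "election \<Rightarrow> cand set \<Rightarrow> cand \<Rightarrow> cand \<Rightarrow> real" where
  "Delta E W a b = pavsc E ((W - {a}) \<union> {b}) - pavsc E W"

fun swapAB :: "cand \<Rightarrow> cand" where
  "swapAB CA = CB"
| "swapAB CB = CA"
| "swapAB c = c"

(* ballots of F(j,k); only meaningful for 1 <= j < k *)
fun Fb :: "nat \<Rightarrow> nat \<Rightarrow> cand set list" where
  "Fb 0 k = []"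
| "Fb (Suc 0) k = [dummies (k - 1) \<union> {CA}, dummies (k - 2) \<union> {CB}]"
| "Fb (Suc (Suc j)) k =
     map (\<lambda>A. swapAB ` A) (Fb (Suc j) k) @ Fb (Suc j) (k - 1)"

definition F_el :: "nat \<Rightarrow> nat \<Rightarrow> election" where
  "F_el j k = \<lparr> ballots = Fb j k, cands = dummies (k - 1) \<union> {CA, CB}, csize = k \<rparr>"

definition E_el :: "nat \<Rightarrow> nat \<Rightarrow> election" where
  "E_el j k = \<lparr> ballots =
       map (\<lambda>A. swapAB ` A \<union> {CX}) (Fb (j - 1) (k - 1))
     @ map (\<lambda>A. A \<union> {CY}) (Fb (j - 1) (k - 1)),
     cands = dummies (k - 2) \<union> {CX, CY, CA, CB}, csize = k \<rparr>"

definition delta :: "nat \<Rightarrow> nat \<Rightarrow> real" where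
  "delta j k = fact j / (\<Prod>j'=0..j. (real k - real j'))"

end

(* Swapping a for b changes the joint score of the two voters of E(j,k) built from a
   ballot D_m \<union> {c} of F(j-1,k-1) by -1/((m+1)(m+2)) if c = a and by +1/((m+1)(m+2))
   if c = b, for either of the two committees.  Hence both swaps gain -T(F(j-1,k-1)), where
   the tilt T(F) sums +1/((m+1)(m+2)) over the a-ballots and -1/((m+1)(m+2)) over the
   b-ballots of F.  Exchanging a and b negates T, so the recursive construction gives
   T(F(j,k)) = -T(F(j-1,k)) + T(F(j-1,k-1)), and the recurrence
   delta(j,k) - delta(j,k+1) = delta(j+1,k+1) yields T(F(j,k)) = -delta(j+1,k+1). *)
theory Submission
  imports Defs "HOL-Analysis.Harmonic_Numbers"
begin

lemma pavsc_harm: "pavsc E W = (\<Sum>A\<leftarrow>ballots E. harm (card (A \<inter> W)))"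
  by (simp add: pavsc_def harm_def inverse_eq_divide)

lemma delta_pos: "j < k \<Longrightarrow> delta j k > 0"
  unfolding delta_def by (intro divide_pos_pos prod_pos) auto

lemma delta_diff_Suc:
  assumes "j < k"
  shows "delta j k - delta j (Suc k) = delta (Suc j) (Suc k)"
proof -
  define P where "P = (\<Prod>i=0..j. real k - real i)"
  define Q where "Q = (\<Prod>i=0..j. real (Suc k) - real i)"
  define R where "R = (\<Prod>i=0..Suc j. real (Suc k) - real i)"
  have R_P: "R = (real k + 1) * P"
    unfolding R_def P_def prod.atLeast0_atMost_Suc_shift by simp
  have R_Q: "R = Q * (real k - real j)"
    unfolding R_def Q_def prod.atLeast0_atMost_Suc by simp
  have "P \<noteq> 0" "Q \<noteq> 0" "real k - real j \<noteq> 0"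
    using assms unfolding P_def Q_def by auto
  then have "fact j / P = fact j * (real k + 1) / R" "fact j / Q = fact j * (real k - real j) / R"
    by (simp add: R_P, simp add: R_Q)
  then have "fact j / P - fact j / Q = fact j * (real k + 1) / R - fact j * (real k - real j) / R"
    by simp
  also have "\<dots> = fact j * (real j + 1) / R"
    by (simp add: diff_divide_distrib[symmetric] algebra_simps)
  finally show ?thesis
    unfolding delta_def P_def Q_def R_def by (simp add: algebra_simps)
qed

lemma delta_one: "delta 1 (Suc (Suc m)) = 1 / (real (m + 1) * real (m + 2))"
  by (simp add: delta_def numeral_2_eq_2 field_simps)

lemma dummies_distinct [simp]:
  "CA \<notin> dummies m" "CB \<notin> dummies m" "CX \<notin> dummies m" "CY \<notin> dummies m"
  unfolding dummies_def by auto

lemma card_dummies [simp]: "card (dummies m) = m"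
  unfolding dummies_def by (simp add: card_image inj_on_def)

lemma finite_dummies [simp]: "finite (dummies m)"
  unfolding dummies_def by simp

lemma dummies_Int_dummies [simp]: "dummies m \<inter> dummies n = dummies (min m n)"
  unfolding dummies_def by auto

lemma swapAB_image_dummies [simp]: "swapAB ` dummies m = dummies m"
  unfolding dummies_def by force

lemma Fb_ballot_shape:
  "A \<in> set (Fb j k) \<Longrightarrow> \<exists>m c. A = insert c (dummies m) \<and> c \<in> {CA, CB} \<and> m \<le> k - 1"
proof (induction j k arbitrary: A rule: Fb.induct)
  case (2 k)
  then have "A = insert CA (dummies (k - 1)) \<or> A = insert CB (dummies (k - 2))"
    by simp
  then show ?case by (elim disjE) (auto intro!: exI)
next
  case (3 j k)
  then consider B where "B \<in> set (Fb (Suc j) k)" "A = swapAB ` B" | "A \<in> set (Fb (Suc j) (k - 1))"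
    by auto
  then show ?case
  proof cases
    case (1 B)
    with "3.IH"(1) obtain m c where "B = insert c (dummies m)" "c \<in> {CA, CB}" "m \<le> k - 1"
      by blast
    with \<open>A = swapAB ` B\<close> show ?thesis by (intro exI[of _ m] exI[of _ "swapAB c"]) auto
  next
    case 2
    with "3.IH"(2) show ?thesis by fastforce
  qed
qed simp

definition ballot_tilt :: "cand set \<Rightarrow> real" where
  "ballot_tilt A = (let m = card (A - {CA, CB}) in
     (if CA \<in> A then 1 else -1) / (real (m + 1) * real (m + 2)))"

lemma ballot_tilt_insert_dummies [simp]:
  "ballot_tilt (insert CA (dummies m)) = 1 / (real (m + 1) * real (m + 2))"
  "ballot_tilt (insert CB (dummies m)) = - 1 / (real (m + 1) * real (m + 2))"
  by (simp_all add: ballot_tilt_def insert_Diff_if)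

lemma sum_ballot_tilt_swapAB:
  "(\<Sum>A\<leftarrow>map ((`) swapAB) (Fb j k). ballot_tilt A) = - (\<Sum>A\<leftarrow>Fb j k. ballot_tilt A)"
proof -
  have "ballot_tilt (swapAB ` A) = - ballot_tilt A" if "A \<in> set (Fb j k)" for A
    using Fb_ballot_shape[OF that] by auto
  then show ?thesis
    by (simp add: uminus_sum_list_map comp_def cong: map_cong)
qed

lemma sum_ballot_tilt_Fb:
  "1 \<le> j \<Longrightarrow> j < k \<Longrightarrow> (\<Sum>A\<leftarrow>Fb j k. ballot_tilt A) = - delta (Suc j) (Suc k)"
proof (induction j k rule: Fb.induct)
  case (2 k)
  obtain n where k: "k = Suc (Suc n)"
    using "2.prems" by (intro that[of "k - 2"]) simp
  have "(\<Sum>A\<leftarrow>Fb 1 k. ballot_tilt A) = delta 1 (Suc k) - delta 1 k"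
    using delta_one[of n] delta_one[of "Suc n"] by (simp add: k)
  also have "\<dots> = - delta 2 (Suc k)"
    using delta_diff_Suc[of 1 k] "2.prems" by (simp add: numeral_2_eq_2)
  finally show ?case by (simp add: numeral_2_eq_2)
next
  case (3 j k)
  have "(\<Sum>A\<leftarrow>map ((`) swapAB) (Fb (Suc j) k). ballot_tilt A) = - (\<Sum>A\<leftarrow>Fb (Suc j) k. ballot_tilt A)"
    by (rule sum_ballot_tilt_swapAB)
  also have "\<dots> = delta (Suc (Suc j)) (Suc k)"
    using "3.IH"(1) "3.prems" by simp
  finally have "(\<Sum>A\<leftarrow>Fb (Suc (Suc j)) k. ballot_tilt A) = delta (Suc (Suc j)) (Suc k) - delta (Suc (Suc j)) k"
    using "3.IH"(2) "3.prems" by simp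
  also have "\<dots> = - delta (Suc (Suc (Suc j))) (Suc k)"
    using delta_diff_Suc[of "Suc (Suc j)" k] "3.prems" by simp
  finally show ?case .
qed simp

definition E_pair_score :: "cand set \<Rightarrow> cand set \<Rightarrow> real" where
  "E_pair_score W A = harm (card ((swapAB ` A \<union> {CX}) \<inter> W)) + harm (card ((A \<union> {CY}) \<inter> W))"

lemma pavsc_E_el:
  "pavsc (E_el j k) W = (\<Sum>A\<leftarrow>Fb (j - 1) (k - 1). E_pair_score W A)"
  by (simp add: pavsc_harm E_el_def E_pair_score_def sum_list_addf comp_def)

lemma E_pair_score_gain:
  assumes "m \<le> n" "c \<in> {CA, CB}" "(z, u, v) \<in> {(CX, CA, CB), (CY, CB, CA)}"
  shows "E_pair_score (dummies n \<union> {z, v}) (insert c (dummies m))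
       - E_pair_score (dummies n \<union> {z, u}) (insert c (dummies m))
       = - ballot_tilt (insert c (dummies m))"
proof -
  have harm_steps: "harm (Suc m) = harm m + 1 / (1 + real m)"
    "harm (Suc (Suc m)) = harm m + 1 / (1 + real m) + 1 / (2 + real m)"
    by (simp_all add: harm_Suc inverse_eq_divide add_ac)
  have partial_fractions: "1 / (1 + real m) - 1 / (2 + real m) = 1 / ((1 + real m) * (2 + real m))"
    by (simp add: field_simps)
  show ?thesis
    using assms partial_fractions by (auto simp: E_pair_score_def harm_steps)
qed

lemma Delta_E_el:
  assumes "2 \<le> j" "j < k" and zuv: "(z, u, v) \<in> {(CX, CA, CB), (CY, CB, CA)}"
  shows "Delta (E_el j k) (dummies (k - 2) \<union> {z, u}) u v = delta j k"
proof -
  let ?L = "Fb (j - 1) (k - 1)"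
  have committee: "(dummies (k - 2) \<union> {z, u} - {u}) \<union> {v} = dummies (k - 2) \<union> {z, v}"
    using zuv by auto
  have gain: "E_pair_score (dummies (k - 2) \<union> {z, v}) A - E_pair_score (dummies (k - 2) \<union> {z, u}) A
      = - ballot_tilt A" if A: "A \<in> set ?L" for A
  proof -
    obtain m c where "A = insert c (dummies m)" "c \<in> {CA, CB}" "m \<le> k - 2"
      using Fb_ballot_shape[OF A] by auto
    then show ?thesis using E_pair_score_gain zuv by blast
  qed
  have "Delta (E_el j k) (dummies (k - 2) \<union> {z, u}) u v
      = (\<Sum>A\<leftarrow>?L. E_pair_score (dummies (k - 2) \<union> {z, v}) A - E_pair_score (dummies (k - 2) \<union> {z, u}) A)"
    unfolding Delta_def committee pavsc_E_el sum_list_subtractf ..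
  also have "\<dots> = (\<Sum>A\<leftarrow>?L. - ballot_tilt A)"
    by (intro arg_cong[where f = sum_list] map_cong refl gain)
  also have "\<dots> = - (\<Sum>A\<leftarrow>?L. ballot_tilt A)"
    by (simp add: uminus_sum_list_map comp_def)
  also have "\<dots> = delta (Suc (j - 1)) (Suc (k - 1))"
    using sum_ballot_tilt_Fb[of "j - 1" "k - 1"] assms(1,2) by simp
  also have "\<dots> = delta j k"
    using assms(1,2) by simp
  finally show ?thesis .
qed

theorem corollary6:
  fixes j k :: nat
  assumes "2 \<le> j" and "j < k"
  shows "Delta (E_el j k) (dummies (k - 2) \<union> {CX, CA}) CA CB = delta j k
       \<and> Delta (E_el j k) (dummies (k - 2) \<union> {CY, CB}) CB CA = delta j k
       \<and> delta j k > 0"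
  using Delta_E_el[OF assms] delta_pos[OF assms(2)] by simp

end
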